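(* Let $\alpha,\beta\in(0,1)$ and let $\mathcal F\subseteq\mathcal F^0(\mathbb R^2)$ be any class of bivariate distributions containing all bivariate normal distributions together with all their (finite) mixtures. Then each of the functionals $F_{X,Y}\mapsto\mathrm{CoVaR}_{\alpha|\beta}(F_{X,Y})$, $F_{X,Y}\mapsto\mathrm{CoES}_{\alpha|\beta}(F_{X,Y})$ and $F_{X,Y}\mapsto\mathrm{MES}_\beta(F_{X,Y})$ is neither identifiable nor elicitable on $\mathcal F$ (i.e., there is neither a strict $\mathcal F$-identification function $\mathbb R\times\mathbb R^2\to\mathbb R^m$ nor a strictly $\mathcal F$-consistent real-valued scoring function for it).
   Context: $\mathcal F^0(\mathbb R^d)$ is the set of all probability distributions on $\mathbb R^d$, identified with cdfs. For a cdf $F$ and $\beta\in[0,1]$, $\mathrm{VaR}_\beta(F)=\inf\{x\in\mathbb R:F(x)\ge\beta\}$ (the lower $\beta$-quantile). For $(X,Y)\sim F_{X,Y}$ with marginals $F_X,F_Y$ and $\beta\in[0,1)$, define the cdf $F_{Y\mid X\succcurlyeq\mathrm{VaR}_\beta(X)}(y)=\frac1{1-\beta}\big[P\{Y\le y,X>\mathrm{VaR}_\beta(X)\}+P\{Y\le y\mid X=\mathrm{VaR}_\beta(X)\}\,(1-\beta-P\{X>\mathrm{VaR}_\beta(X)\})\big]$, where the second summand is $0$ if $P\{X>\mathrm{VaR}_\beta(X)\}=1-\beta$ (it equals the conditional cdf of $Y$ given $X\ge\mathrm{VaR}_\beta(X)$ when $F_X$ is continuous). Then $\mathrm{CoVaR}_{\alpha|\beta}(F_{X,Y})=\mathrm{VaR}_\alpha(F_{Y\mid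 X\succcurlyeq\mathrm{VaR}_\beta(X)})$, $\mathrm{CoES}_{\alpha|\beta}(F_{X,Y})=\frac1{1-\alpha}\int_\alpha^1\mathrm{CoVaR}_{\gamma|\beta}(F_{X,Y})\,\mathrm d\gamma\in(-\infty,\infty]$, $\mathrm{MES}_\beta(F_{X,Y})=\int_0^1\mathrm{CoVaR}_{\gamma|\beta}(F_{X,Y})\,\mathrm d\gamma$ (the mean of $F_{Y\mid X\succcurlyeq\mathrm{VaR}_\beta(X)}$). Identification functions/strict consistency: a map $V$ with $\int V(r,\bm y)\,\mathrm dF(\bm y)=0$ iff $r=T(F)$ for all $F\in\mathcal F$; a real score $S$ with $\int S(T(F),\bm y)\,\mathrm dF<\int S(r,\bm y)\,\mathrm dF$ for all $r\ne T(F)$, $F\in\mathcal F$ (integrability assumed). *)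

theory Defs
  imports "HOL-Probability.Probability"
begin

definition prob_dists2 :: "(real \<times> real) measure set" where
  "prob_dists2 = {P. prob_space P \<and> sets P = sets borel}"

definition cdf_VaR :: "(real \<Rightarrow> real) \<Rightarrow> real \<Rightarrow> real" where
  "cdf_VaR G b = Inf {x. G x \<ge> b}"

definition VaR_X :: "real \<Rightarrow> (real \<times> real) measure \<Rightarrow> real" where
  "VaR_X b F = cdf_VaR (\<lambda>x. measure F {p. fst p \<le> x}) b"

text \<open>The cdf of Y given X "\<succeq>" VaR_beta(X), literally as in the paper.\<close>
definition cond_cdf :: "real \<Rightarrow> (real \<times> real) measure \<Rightarrow> real \<Rightarrow> real" where
  "cond_cdf b F y =
     (let v = VaR_X b F;
          pgt = measure F {p. fst p > v};
          peq = measure F {p. fst p = v}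
      in (measure F {p. snd p \<le> y \<and> fst p > v}
          + (if pgt = 1 - b then 0
             else (measure F {p. snd p \<le> y \<and> fst p = v} / peq) * (1 - b - pgt))) / (1 - b))"

definition CoVaR :: "real \<Rightarrow> real \<Rightarrow> (real \<times> real) measure \<Rightarrow> real" where
  "CoVaR a b F = cdf_VaR (cond_cdf b F) a"

text \<open>Extended-real Lebesgue integral of f over A: positive part minus negative part
  (left unspecified in the meaningless case \<infinity> - \<infinity>).\<close>
definition ext_integral :: "real set \<Rightarrow> (real \<Rightarrow> real) \<Rightarrow> ereal" where
  "ext_integral A f =
     (let pp = (\<integral>\<^sup>+x\<in>A. ennreal (f x) \<partial>lborel);
          nn = (\<integral>\<^sup>+x\<in>A. ennreal (- f x) \<partial>lborel)
      in if pp = \<infinity> \<and> nn = \<infinity> then undefined else enn2ereal pp - enn2ereal nn)"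

definition CoES :: "real \<Rightarrow> real \<Rightarrow> (real \<times> real) measure \<Rightarrow> ereal" where
  "CoES a b F = ereal (1 / (1 - a)) * ext_integral {a<..<1} (\<lambda>g. CoVaR g b F)"

definition MES :: "real \<Rightarrow> (real \<times> real) measure \<Rightarrow> ereal" where
  "MES b F = ext_integral {0<..<1} (\<lambda>g. CoVaR g b F)"

definition strict_identification ::
  "(real \<Rightarrow> 'a \<Rightarrow> 'b::{banach,second_countable_topology}) \<Rightarrow> ('a measure \<Rightarrow> ereal) \<Rightarrow> 'a measure set \<Rightarrow> bool" where
  "strict_identification V T C \<longleftrightarrow>
     (\<forall>F\<in>C. \<forall>r. integrable F (V r) \<and> ((\<integral>y. V r y \<partial>F) = 0 \<longleftrightarrow> T F = ereal r))"

definition strictly_consistent ::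
  "(real \<Rightarrow> 'a \<Rightarrow> real) \<Rightarrow> ('a measure \<Rightarrow> ereal) \<Rightarrow> 'a measure set \<Rightarrow> bool" where
  "strictly_consistent S T C \<longleftrightarrow>
     (\<forall>F\<in>C. (\<forall>r. integrable F (S r)) \<and>
        (\<forall>t r. T F = ereal t \<longrightarrow> r \<noteq> t \<longrightarrow> (\<integral>y. S t y \<partial>F) < (\<integral>y. S r y \<partial>F)))"

definition elicitable :: "('a measure \<Rightarrow> ereal) \<Rightarrow> 'a measure set \<Rightarrow> bool" where
  "elicitable T C \<longleftrightarrow> (\<exists>S. strictly_consistent S T C)"

definition bvn_density :: "real \<Rightarrow> real \<Rightarrow> real \<Rightarrow> real \<Rightarrow> real \<Rightarrow> real \<times> real \<Rightarrow> real" where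
  "bvn_density m1 m2 s1 s2 \<rho> p =
     (let u = (fst p - m1) / s1; w = (snd p - m2) / s2
      in exp (- (u\<^sup>2 - 2 * \<rho> * u * w + w\<^sup>2) / (2 * (1 - \<rho>\<^sup>2))) / (2 * pi * s1 * s2 * sqrt (1 - \<rho>\<^sup>2)))"

definition bivariate_normal :: "(real \<times> real) measure \<Rightarrow> bool" where
  "bivariate_normal P \<longleftrightarrow>
     (\<exists>m1 m2 s1 s2 \<rho>. s1 > 0 \<and> s2 > 0 \<and> \<bar>\<rho>\<bar> < 1 \<and>
        P = density lborel (\<lambda>p. ennreal (bvn_density m1 m2 s1 s2 \<rho> p)))"

text \<open>Finite mixtures of bivariate normals (includes the normals themselves, n = 1).\<close>
definition normal_mixture :: "(real \<times> real) measure \<Rightarrow> bool" where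
  "normal_mixture P \<longleftrightarrow> sets P = sets borel \<and>
     (\<exists>(n::nat) w Q. (\<forall>i<n. bivariate_normal (Q i) \<and> 0 \<le> w i) \<and> (\<Sum>i<n. w i) = (1::real) \<and>
        (\<forall>A\<in>sets borel. emeasure P A = (\<Sum>i<n. ennreal (w i) * emeasure (Q i) A)))"

end

theory Submission
  imports Defs
begin

text \<open>Identification functions and strictly consistent scores have expectations that are affine
  in the distribution, so identifiable and elicitable functionals have convex level sets. We
  exhibit two normal mixtures for which the conditional law of \<open>Y\<close> given
  \<open>X \<succeq> VaR\<^sub>\<beta>(X)\<close> is the same equal mixture of \<open>N(1,1)\<close> and \<open>N(0,1)\<close>, while their
  midpoint puts less than half of the conditional mass on \<open>N(1,1)\<close>. In the first mixture
  \<open>X \<sim> N(1,1)\<close> is independent of \<open>Y\<close>; in the second the two \<open>Y\<close>-components are paired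
  with the \<open>X\<close>-laws \<open>N(0,1)\<close> and \<open>N(-z,4)\<close>, \<open>z = \<Phi>\<^sup>-\<^sup>1(\<beta>)\<close>, which share the
  \<open>\<beta>\<close>-quantile \<open>z\<close>. In both, every component has tail probability \<open>1 - \<beta>\<close> beyond
  \<open>VaR\<^sub>\<beta>(X)\<close>, so conditioning keeps the weights equal. In the midpoint \<open>VaR\<^sub>\<beta>(X) > z\<close>,
  where the wide component \<open>N(-z,4)\<close>, carrying the unshifted \<open>Y\<close>-law, has a heavier tail
  than its partner \<open>N(0,1)\<close>. Every quantile of \<open>p \<Phi>(y - 1) + (1 - p) \<Phi>(y)\<close> strictly
  increases with \<open>p\<close>, hence so do CoVaR, CoES and MES.\<close>

section \<open>The normal distribution function\<close>

definition normal_measure :: "real \<Rightarrow> real \<Rightarrow> real measure" where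
  "normal_measure m s = density lborel (\<lambda>x. ennreal (normal_density m s x))"

definition Phi :: "real \<Rightarrow> real" where
  "Phi x = measure (normal_measure 0 1) {..x}"

lemma sets_normal_measure [simp, measurable_cong]: "sets (normal_measure m s) = sets borel"
  by (simp add: normal_measure_def)

lemma space_normal_measure [simp]: "space (normal_measure m s) = UNIV"
  by (simp add: normal_measure_def)

lemma prob_space_normal_measure: "0 < s \<Longrightarrow> prob_space (normal_measure m s)"
  unfolding normal_measure_def by (rule prob_space_normal_density)

lemma real_distribution_normal_measure: "0 < s \<Longrightarrow> real_distribution (normal_measure m s)"
  by (simp add: real_distribution_def real_distribution_axioms_def prob_space_normal_measure)

lemma emeasure_normal_measure:
  "A \<in> sets borel \<Longrightarrow>
     emeasure (normal_measure m s) A = (\<integral>\<^sup>+x. ennreal (normal_density m s x) * indicator A x \<partial>lborel)"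
  unfolding normal_measure_def by (subst emeasure_density) auto

lemma emeasure_normal_measure_singleton: "emeasure (normal_measure m s) {x} = 0"
proof -
  have "AE t in lborel. ennreal (normal_density m s t) * indicator {x} t = 0"
    using AE_lborel_singleton[of x] by (auto elim!: eventually_mono)
  then show ?thesis
    by (simp add: emeasure_normal_measure nn_integral_0_iff_AE)
qed

lemma measure_normal_measure_atMost:
  assumes s: "0 < s"
  shows "measure (normal_measure m s) {..x} = Phi ((x - m) / s)"
proof -
  have "emeasure (normal_measure m s) {..x} = (\<integral>\<^sup>+t. ennreal (normal_density m s t) * indicator {..x} t \<partial>lborel)"
    by (simp add: emeasure_normal_measure)
  also have "\<dots> = ennreal \<bar>s\<bar> * (\<integral>\<^sup>+u. ennreal (normal_density m s (m + s * u)) * indicator {..x} (m + s * u) \<partial>lborel)"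
    by (rule nn_integral_real_affine) (use s in auto)
  also have "\<dots> = (\<integral>\<^sup>+u. ennreal (normal_density 0 1 u) * indicator {..(x - m) / s} u \<partial>lborel)"
  proof -
    have "ennreal \<bar>s\<bar> * (ennreal (normal_density m s (m + s * u)) * indicator {..x} (m + s * u))
        = ennreal (normal_density 0 1 u) * indicator {..(x - m) / s} u" for u
    proof -
      have "\<bar>s\<bar> * normal_density m s (m + s * u) = normal_density 0 1 u"
        using s by (simp add: normal_density_def real_sqrt_mult field_simps power2_eq_square)
      moreover have "(m + s * u \<le> x) = (u \<le> (x - m) / s)"
        using s by (simp add: field_simps)
      ultimately show ?thesis
        using s by (auto simp: indicator_def ennreal_mult'[symmetric] simp del: ennreal_mult')
    qed
    then show ?thesis by (subst nn_integral_cmult[symmetric]) (auto simp: mult.assoc)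
  qed
  also have "\<dots> = emeasure (normal_measure 0 1) {..(x - m) / s}"
    by (simp add: emeasure_normal_measure)
  finally show ?thesis
    unfolding Phi_def measure_def by simp
qed

lemma measure_normal_measure_greaterThan:
  assumes s: "0 < s"
  shows "measure (normal_measure m s) {x<..} = 1 - Phi ((x - m) / s)"
proof -
  interpret prob_space "normal_measure m s" by (rule prob_space_normal_measure[OF s])
  have "measure (normal_measure m s) {x<..} = measure (normal_measure m s) (space (normal_measure m s) - {..x})"
    by (intro arg_cong[where f="measure _"]) auto
  then show ?thesis
    by (simp add: prob_compl measure_normal_measure_atMost[OF s] del: space_normal_measure)
qed

lemma measure_normal_measure_UNIV: "0 < s \<Longrightarrow> measure (normal_measure m s) UNIV = 1"
  using prob_space.prob_space[OF prob_space_normal_measure] by simp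

lemma cdf_normal_measure: "0 < s \<Longrightarrow> cdf (normal_measure m s) x = Phi ((x - m) / s)"
  by (simp add: cdf_def measure_normal_measure_atMost)

lemma Phi_less:
  assumes "x < y"
  shows "Phi x < Phi y"
proof -
  interpret prob_space "normal_measure 0 1" by (rule prob_space_normal_measure) simp
  have "emeasure (normal_measure 0 1) {x<..y} \<noteq> 0"
  proof
    assume "emeasure (normal_measure 0 1) {x<..y} = 0"
    then have "AE t in lborel. ennreal (normal_density 0 1 t) * indicator {x<..y} t = 0"
      by (simp add: emeasure_normal_measure nn_integral_0_iff_AE)
    then have "AE t in lborel. t \<notin> {x<..y}"
      by (rule eventually_mono) (simp add: indicator_def normal_density_pos less_imp_neq[symmetric] split: if_splits)
    then have "emeasure lborel {x<..y} = 0"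
      by (subst (asm) AE_iff_measurable[where N="{x<..y}"]) auto
    with assms show False by simp
  qed
  then have pos: "0 < measure (normal_measure 0 1) {x<..y}"
    by (simp add: emeasure_eq_measure zero_less_measure_iff)
  have "Phi y = measure (normal_measure 0 1) ({..x} \<union> {x<..y})"
    unfolding Phi_def using assms by (intro arg_cong[where f="measure _"]) auto
  also have "\<dots> = Phi x + measure (normal_measure 0 1) {x<..y}"
    unfolding Phi_def by (subst finite_measure_Union) auto
  finally show ?thesis using pos by simp
qed

lemma Phi_mono: "x \<le> y \<Longrightarrow> Phi x \<le> Phi y"
  using Phi_less[of x y] by (cases "x = y") auto

lemma Phi_le_1: "Phi x \<le> 1"
  using prob_space.prob_le_1[OF prob_space_normal_measure] by (simp add: Phi_def)

text \<open>Markov's inequality for the second moment, which is 1.\<close>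
lemma measure_std_normal_le:
  assumes A: "A \<in> sets borel" and x: "x \<noteq> 0" and le: "\<And>t. t \<in> A \<Longrightarrow> x\<^sup>2 \<le> t\<^sup>2"
  shows "measure (normal_measure 0 1) A \<le> 1 / x\<^sup>2"
proof -
  interpret prob_space "normal_measure 0 1" by (rule prob_space_normal_measure) simp
  have moment: "(\<integral>\<^sup>+t. ennreal (normal_density 0 1 t * t\<^sup>2) \<partial>lborel) = 1"
    using integrable_std_normal_moment[of 2] integral_std_normal_moment_even[of 1]
    by (subst nn_integral_eq_integral) auto
  have "emeasure (normal_measure 0 1) A = (\<integral>\<^sup>+t. ennreal (normal_density 0 1 t) * indicator A t \<partial>lborel)"
    using A by (simp add: emeasure_normal_measure)
  also have "\<dots> \<le> (\<integral>\<^sup>+t. ennreal (1 / x\<^sup>2) * ennreal (normal_density 0 1 t * t\<^sup>2) \<partial>lborel)"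
  proof (rule nn_integral_mono)
    fix t
    have "t \<in> A \<Longrightarrow> normal_density 0 1 t \<le> 1 / x\<^sup>2 * (normal_density 0 1 t * t\<^sup>2)"
      using le x by (simp add: field_simps mult_left_mono)
    then show "ennreal (normal_density 0 1 t) * indicator A t \<le> ennreal (1 / x\<^sup>2) * ennreal (normal_density 0 1 t * t\<^sup>2)"
      by (cases "t \<in> A") (auto simp: ennreal_mult'[symmetric] ennreal_leI)
  qed
  also have "\<dots> = ennreal (1 / x\<^sup>2)"
    by (simp add: nn_integral_cmult moment)
  finally show ?thesis
    using x by (simp add: emeasure_eq_measure ennreal_le_iff2)
qed

lemma Phi_upper_tail: "0 < x \<Longrightarrow> 1 - Phi x \<le> 1 / x\<^sup>2"
  using measure_std_normal_le[of "{x<..}" x] measure_normal_measure_greaterThan[of 1 0 x]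
  by (auto intro: power_mono)

lemma Phi_lower_tail:
  assumes "x < 0"
  shows "Phi x \<le> 1 / x\<^sup>2"
  unfolding Phi_def
proof (rule measure_std_normal_le)
  fix t assume "t \<in> {..x}"
  then have "(- x)\<^sup>2 \<le> (- t)\<^sup>2"
    using assms by (intro power_mono) auto
  then show "x\<^sup>2 \<le> t\<^sup>2" by simp
qed (use assms in auto)

section \<open>Quantiles of continuous strictly increasing distribution functions\<close>

definition continuous_strict_cdf :: "(real \<Rightarrow> real) \<Rightarrow> bool" where
  "continuous_strict_cdf H \<longleftrightarrow>
     continuous_on UNIV H \<and> strict_mono H \<and> (H \<longlongrightarrow> 0) at_bot \<and> (H \<longlongrightarrow> 1) at_top"

lemma cdf_VaR_eqI:
  assumes "strict_mono H" and "H t = g"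
  shows "cdf_VaR H g = t"
proof -
  have "{x. g \<le> H x} = {t..}"
    using assms by (auto simp: strict_mono_less_eq)
  then show ?thesis
    by (simp add: cdf_VaR_def)
qed

lemma continuous_strict_cdf_attains:
  assumes H: "continuous_strict_cdf H" and g: "0 < g" "g < 1"
  shows "\<exists>t. H t = g"
proof -
  from H have lim_bot: "(H \<longlongrightarrow> 0) at_bot" and lim_top: "(H \<longlongrightarrow> 1) at_top"
    and cont: "continuous_on UNIV H"
    by (auto simp: continuous_strict_cdf_def)
  obtain a where a: "\<And>x. x \<le> a \<Longrightarrow> H x < g"
    using order_tendstoD(2)[OF lim_bot g(1)] by (auto simp: eventually_at_bot_linorder)
  obtain b where b: "\<And>x. b \<le> x \<Longrightarrow> g < H x"
    using order_tendstoD(1)[OF lim_top g(2)] by (auto simp: eventually_at_top_linorder)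
  have "H a \<le> g" "g \<le> H (max a b)" "a \<le> max a b"
    using a[of a] b[of "max a b"] by auto
  then show ?thesis
    using IVT'[of H a g "max a b"] continuous_on_subset[OF cont] by blast
qed

lemma continuous_strict_cdf_cdf_VaR:
  assumes H: "continuous_strict_cdf H" and "0 < g" "g < 1"
  shows "H (cdf_VaR H g) = g"
proof -
  obtain t where "H t = g"
    using continuous_strict_cdf_attains[OF assms] by blast
  moreover have "strict_mono H"
    using H by (simp add: continuous_strict_cdf_def)
  ultimately show ?thesis
    using cdf_VaR_eqI by simp
qed

lemma continuous_strict_cdf_normal_mixture:
  fixes w m s :: "'i \<Rightarrow> real"
  assumes I: "finite I" and w: "\<And>i. i \<in> I \<Longrightarrow> 0 \<le> w i" and sum_w: "(\<Sum>i\<in>I. w i) = 1"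
    and s: "\<And>i. i \<in> I \<Longrightarrow> 0 < s i"
  shows "continuous_strict_cdf (\<lambda>x. \<Sum>i\<in>I. w i * Phi ((x - m i) / s i))"
proof -
  have cdf: "(\<lambda>x. \<Sum>i\<in>I. w i * Phi ((x - m i) / s i)) = (\<lambda>x. \<Sum>i\<in>I. w i * cdf (normal_measure (m i) (s i)) x)"
    using s by (simp add: cdf_normal_measure)
  have dist: "real_distribution (normal_measure (m i) (s i))" if "i \<in> I" for i
    using s[OF that] by (rule real_distribution_normal_measure)
  have "continuous_on UNIV (\<lambda>x. \<Sum>i\<in>I. w i * cdf (normal_measure (m i) (s i)) x)"
  proof (intro continuous_at_imp_continuous_on ballI continuous_intros)
    fix x i assume "i \<in> I"
    then show "isCont (cdf (normal_measure (m i) (s i))) x"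
      using finite_borel_measure.isCont_cdf[OF real_distribution.finite_borel_measure_M[OF dist]]
      by (simp add: measure_def emeasure_normal_measure_singleton)
  qed
  moreover have "((\<lambda>x. \<Sum>i\<in>I. w i * cdf (normal_measure (m i) (s i)) x) \<longlongrightarrow> (\<Sum>i\<in>I. w i * 0)) at_bot"
    using finite_borel_measure.cdf_lim_at_bot[OF real_distribution.finite_borel_measure_M[OF dist]]
    by (intro tendsto_intros) auto
  moreover have "((\<lambda>x. \<Sum>i\<in>I. w i * cdf (normal_measure (m i) (s i)) x) \<longlongrightarrow> (\<Sum>i\<in>I. w i * 1)) at_top"
    using real_distribution.cdf_lim_at_top_prob[OF dist] by (intro tendsto_intros) auto
  moreover have "strict_mono (\<lambda>x. \<Sum>i\<in>I. w i * Phi ((x - m i) / s i))"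
  proof (rule strict_monoI)
    fix x y :: real assume "x < y"
    have "\<not> (\<forall>i\<in>I. w i = 0)"
      using sum_w by (metis sum.neutral zero_neq_one)
    then obtain j where j: "j \<in> I" "0 < w j"
      using w by (auto simp: less_le)
    show "(\<Sum>i\<in>I. w i * Phi ((x - m i) / s i)) < (\<Sum>i\<in>I. w i * Phi ((y - m i) / s i))"
    proof (rule sum_strict_mono_ex1[OF I])
      show "\<forall>i\<in>I. w i * Phi ((x - m i) / s i) \<le> w i * Phi ((y - m i) / s i)"
        using w s[THEN less_imp_le] \<open>x < y\<close> by (auto intro!: mult_left_mono Phi_mono divide_right_mono)
      show "\<exists>i\<in>I. w i * Phi ((x - m i) / s i) < w i * Phi ((y - m i) / s i)"
        using j s[OF j(1)] \<open>x < y\<close> by (intro bexI[OF _ j(1)] mult_strict_left_mono Phi_less divide_strict_right_mono) auto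
    qed
  qed
  ultimately show ?thesis
    unfolding continuous_strict_cdf_def cdf using sum_w by simp
qed

section \<open>A two-component location mixture\<close>

definition shift_mix_cdf :: "real \<Rightarrow> real \<Rightarrow> real" where
  "shift_mix_cdf p y = p * Phi (y - 1) + (1 - p) * Phi y"

definition shift_mix_quantile :: "real \<Rightarrow> real \<Rightarrow> real" where
  "shift_mix_quantile p g = cdf_VaR (shift_mix_cdf p) g"

lemma continuous_strict_cdf_shift_mix_cdf:
  assumes "0 \<le> p" "p \<le> 1"
  shows "continuous_strict_cdf (shift_mix_cdf p)"
proof -
  have "shift_mix_cdf p = (\<lambda>x. \<Sum>i\<in>{True, False}. (if i then p else 1 - p) * Phi ((x - of_bool i) / 1))"
    by (simp add: fun_eq_iff shift_mix_cdf_def)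
  then show ?thesis
    by (simp only:) (rule continuous_strict_cdf_normal_mixture, use assms in auto)
qed

lemma shift_mix_cdf_quantile:
  "0 \<le> p \<Longrightarrow> p \<le> 1 \<Longrightarrow> 0 < g \<Longrightarrow> g < 1 \<Longrightarrow> shift_mix_cdf p (shift_mix_quantile p g) = g"
  unfolding shift_mix_quantile_def by (rule continuous_strict_cdf_cdf_VaR[OF continuous_strict_cdf_shift_mix_cdf])

lemma strict_mono_shift_mix_cdf: "0 \<le> p \<Longrightarrow> p \<le> 1 \<Longrightarrow> strict_mono (shift_mix_cdf p)"
  using continuous_strict_cdf_shift_mix_cdf by (simp add: continuous_strict_cdf_def)

lemma shift_mix_quantile_less:
  assumes p: "0 \<le> p" "p < p'" "p' \<le> 1" and g: "0 < g" "g < 1"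
  shows "shift_mix_quantile p g < shift_mix_quantile p' g"
proof (rule ccontr)
  let ?q = "shift_mix_quantile p' g"
  assume "\<not> shift_mix_quantile p g < ?q"
  then have "shift_mix_cdf p ?q \<le> shift_mix_cdf p (shift_mix_quantile p g)"
    using strict_mono_shift_mix_cdf[of p] p by (simp add: strict_mono_less_eq)
  also have "\<dots> = shift_mix_cdf p' ?q"
    using p g by (simp add: shift_mix_cdf_quantile)
  also have "\<dots> < shift_mix_cdf p ?q"
  proof -
    have "0 < (p' - p) * (Phi ?q - Phi (?q - 1))"
      using p Phi_less[of "?q - 1" ?q] by simp
    then show ?thesis
      by (simp add: shift_mix_cdf_def algebra_simps)
  qed
  finally show False by simp
qed

lemma mono_on_shift_mix_quantile:
  assumes "0 \<le> p" "p \<le> 1"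
  shows "mono_on {0<..<1} (shift_mix_quantile p)"
proof (rule mono_onI)
  fix g g' :: real assume "g \<in> {0<..<1}" "g' \<in> {0<..<1}" "g \<le> g'"
  then show "shift_mix_quantile p g \<le> shift_mix_quantile p g'"
    using assms strict_mono_shift_mix_cdf[OF assms] shift_mix_cdf_quantile[OF assms]
    by (metis greaterThanLessThan_iff strict_mono_less_eq)
qed

text \<open>The quantile lies between the \<open>g\<close>-quantiles of \<open>N(0,1)\<close> and \<open>N(1,1)\<close>, which the
  tail bounds on \<^const>\<open>Phi\<close> control.\<close>
lemma abs_shift_mix_quantile_le:
  assumes p: "0 \<le> p" "p \<le> 1" and g: "0 < g" "g < 1"
  shows "\<bar>shift_mix_quantile p g\<bar> \<le> 2 / sqrt (1 - g) + 1 / sqrt g"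
proof -
  let ?q = "shift_mix_quantile p g"
  have H: "shift_mix_cdf p ?q = g"
    using p g by (rule shift_mix_cdf_quantile)
  have "g - Phi (?q - 1) = (1 - p) * (Phi ?q - Phi (?q - 1))" "Phi ?q - g = p * (Phi ?q - Phi (?q - 1))"
    using H by (auto simp: shift_mix_cdf_def algebra_simps)
  moreover have "Phi (?q - 1) \<le> Phi ?q"
    by (rule Phi_mono) simp
  ultimately have lo: "Phi (?q - 1) \<le> g" and hi: "g \<le> Phi ?q"
    using p by (metis diff_ge_0_iff_ge mult_nonneg_nonneg)+
  have s1: "1 \<le> 1 / sqrt (1 - g)" and s2: "0 < 1 / sqrt g"
    using g by (auto simp: real_sqrt_le_1_iff)
  have "?q \<le> 2 / sqrt (1 - g)"
  proof (cases "?q > 1")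
    case True
    have "1 - g \<le> 1 / (?q - 1)\<^sup>2"
      using Phi_upper_tail[of "?q - 1"] True lo by simp
    then have "(?q - 1)\<^sup>2 \<le> 1 / (1 - g)"
      using True g by (simp add: field_simps)
    then have "?q - 1 \<le> 1 / sqrt (1 - g)"
      using True real_sqrt_le_mono by (fastforce simp: real_sqrt_divide)
    then show ?thesis using s1 by simp
  qed (use s1 in simp)
  moreover have "- ?q \<le> 1 / sqrt g"
  proof (cases "?q < 0")
    case True
    have "g \<le> 1 / ?q\<^sup>2"
      using Phi_lower_tail[OF True] hi by simp
    then have "?q\<^sup>2 \<le> 1 / g"
      using True g by (simp add: field_simps)
    then show ?thesis
      using True real_sqrt_le_mono by (fastforce simp: real_sqrt_divide)
  qed (use s2 in linarith)
  ultimately show ?thesis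
    using s1 s2 by linarith
qed

lemma set_integrable_inverse_sqrt_bound:
  "set_integrable lborel {0<..<1::real} (\<lambda>g. 2 / sqrt (1 - g) + 1 / sqrt g)"
proof -
  have powr_half: "t powr - (1/2) = 1 / sqrt t" if "0 < t" for t :: real
  proof -
    have "t powr - (1/2) = inverse (t powr (1/2))"
      by (rule powr_minus)
    then show ?thesis
      using that by (simp add: powr_half_sqrt inverse_eq_divide)
  qed
  have beta1: "set_integrable lborel {0<..<1::real} (\<lambda>t. t powr (1/2 - 1) * (1 - t) powr (1 - 1))"
    by (rule set_integrable_subset[OF integrable_Beta[of "1/2" 1]]) auto
  have inv_sqrt: "set_integrable lborel {0<..<1::real} (\<lambda>t. 1 / sqrt t)"
    by (rule iffD1[OF set_integrable_cong beta1]) (auto simp: powr_half)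
  have beta2: "set_integrable lborel {0<..<1::real} (\<lambda>t. t powr (1 - 1) * (1 - t) powr (1/2 - 1))"
    by (rule set_integrable_subset[OF integrable_Beta[of 1 "1/2"]]) auto
  have "set_integrable lborel {0<..<1::real} (\<lambda>t. 2 * (1 / sqrt (1 - t)))"
    by (intro set_integrable_mult_right, rule iffD1[OF set_integrable_cong beta2]) (auto simp: powr_half)
  from set_integral_add(1)[OF this inv_sqrt] show ?thesis
    by simp
qed

lemma set_integrable_shift_mix_quantile:
  assumes p: "0 \<le> p" "p \<le> 1" and a: "0 \<le> a"
  shows "set_integrable lborel {a<..<1} (shift_mix_quantile p)"
proof (rule set_integrable_bound)
  show "set_integrable lborel {a<..<1} (\<lambda>g. 2 / sqrt (1 - g) + 1 / sqrt g)"
    by (rule set_integrable_subset[OF set_integrable_inverse_sqrt_bound]) (use a in auto)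
  have "mono_on {a<..<1} (shift_mix_quantile p)"
    by (rule mono_on_subset[OF mono_on_shift_mix_quantile[OF p]]) (use a in auto)
  then have "shift_mix_quantile p \<in> borel_measurable (restrict_space borel {a<..<1})"
    by (rule borel_measurable_mono_on_fnc)
  then show "set_borel_measurable lborel {a<..<1} (shift_mix_quantile p)"
    unfolding set_borel_measurable_def
    by (subst (asm) borel_measurable_restrict_space_iff) (auto cong: measurable_cong_sets)
  show "AE g in lborel. g \<in> {a<..<1} \<longrightarrow> norm (shift_mix_quantile p g) \<le> norm (2 / sqrt (1 - g) + 1 / sqrt g)"
    using abs_shift_mix_quantile_le[OF p] a by (intro AE_I2) force
qed

lemma set_integral_shift_mix_quantile_less:
  assumes p: "0 \<le> p" "p < p'" "p' \<le> 1" and a: "0 \<le> a" "a < 1"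
  shows "(LINT g:{a<..<1}|lborel. shift_mix_quantile p g) < (LINT g:{a<..<1}|lborel. shift_mix_quantile p' g)"
proof -
  let ?h = "\<lambda>g. indicator {a<..<1} g *\<^sub>R (shift_mix_quantile p' g - shift_mix_quantile p g)"
  have pos: "\<And>g. g \<in> {a<..<1} \<Longrightarrow> 0 < shift_mix_quantile p' g - shift_mix_quantile p g"
    using shift_mix_quantile_less[OF p] a by simp
  have ints: "set_integrable lborel {a<..<1} (shift_mix_quantile p)" "set_integrable lborel {a<..<1} (shift_mix_quantile p')"
    using p a by (simp_all add: set_integrable_shift_mix_quantile)
  have int: "integrable lborel ?h"
    using set_integral_diff(1)[OF ints(2,1)] by (simp add: set_integrable_def)
  have nonneg: "AE g in lborel. 0 \<le> ?h g"
    using pos by (auto simp: indicator_def less_imp_le)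
  have "integral\<^sup>L lborel ?h \<noteq> 0"
  proof
    assume "integral\<^sup>L lborel ?h = 0"
    then have "AE g in lborel. ?h g = 0"
      using integral_nonneg_eq_0_iff_AE[OF int nonneg] by simp
    then have "AE g in lborel. g \<notin> {a<..<1}"
      by (rule eventually_mono) (use pos in \<open>force simp: indicator_def\<close>)
    then have "emeasure lborel {a<..<1} = 0"
      by (subst (asm) AE_iff_measurable[where N="{a<..<1}"]) auto
    with a show False by simp
  qed
  moreover have "0 \<le> integral\<^sup>L lborel ?h"
    using nonneg by (rule integral_nonneg_AE)
  moreover have "integral\<^sup>L lborel ?h = (LINT g:{a<..<1}|lborel. shift_mix_quantile p' g) - (LINT g:{a<..<1}|lborel. shift_mix_quantile p g)"
    using set_integral_diff(2)[OF ints(2,1)] by (simp add: set_lebesgue_integral_def)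
  ultimately show ?thesis by linarith
qed

section \<open>Mixtures of products of normal distributions\<close>

definition prod_normal_density :: "real \<Rightarrow> real \<Rightarrow> real \<Rightarrow> real \<times> real \<Rightarrow> real" where
  "prod_normal_density a s b p = normal_density a s (fst p) * normal_density b 1 (snd p)"

definition prod_normal_mixture_density ::
  "nat \<Rightarrow> (nat \<Rightarrow> real) \<Rightarrow> (nat \<Rightarrow> real) \<Rightarrow> (nat \<Rightarrow> real) \<Rightarrow> (nat \<Rightarrow> real) \<Rightarrow> real \<times> real \<Rightarrow> real" where
  "prod_normal_mixture_density n w mx sx my p = (\<Sum>i<n. w i * prod_normal_density (mx i) (sx i) (my i) p)"

definition prod_normal_mixture ::
  "nat \<Rightarrow> (nat \<Rightarrow> real) \<Rightarrow> (nat \<Rightarrow> real) \<Rightarrow> (nat \<Rightarrow> real) \<Rightarrow> (nat \<Rightarrow> real) \<Rightarrow> (real \<times> real) measure" where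
  "prod_normal_mixture n w mx sx my = density lborel (\<lambda>p. ennreal (prod_normal_mixture_density n w mx sx my p))"

definition valid_mixture :: "nat \<Rightarrow> (nat \<Rightarrow> real) \<Rightarrow> (nat \<Rightarrow> real) \<Rightarrow> bool" where
  "valid_mixture n w sx \<longleftrightarrow> (\<forall>i<n. 0 \<le> w i \<and> 0 < sx i) \<and> (\<Sum>i<n. w i) = 1"

lemma borel_measurable_prod_normal_density [measurable]:
  "prod_normal_density a s b \<in> borel_measurable borel"
  unfolding prod_normal_density_def[abs_def] by (subst borel_prod[symmetric]) measurable

lemma borel_measurable_prod_normal_mixture_density [measurable]:
  "prod_normal_mixture_density n w mx sx my \<in> borel_measurable borel"
  unfolding prod_normal_mixture_density_def[abs_def] by measurable

lemma prod_normal_density_nonneg: "0 \<le> prod_normal_density a s b p"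
  by (simp add: prod_normal_density_def)

lemma prod_normal_mixture_density_nonneg:
  "valid_mixture n w sx \<Longrightarrow> 0 \<le> prod_normal_mixture_density n w mx sx my p"
  unfolding prod_normal_mixture_density_def valid_mixture_def
  by (auto intro!: sum_nonneg mult_nonneg_nonneg prod_normal_density_nonneg)

lemma sets_prod_normal_mixture [simp]: "sets (prod_normal_mixture n w mx sx my) = sets borel"
  by (simp add: prod_normal_mixture_def)

lemma density_prod_normal_density:
  assumes "0 < s"
  shows "density lborel (\<lambda>p. ennreal (prod_normal_density a s b p)) = normal_measure a s \<Otimes>\<^sub>M normal_measure b 1"
proof -
  interpret N: prob_space "normal_measure b 1"
    by (rule prob_space_normal_measure) simp
  have "normal_measure a s \<Otimes>\<^sub>M normal_measure b 1
      = density (lborel \<Otimes>\<^sub>M lborel) (\<lambda>(x, y). ennreal (normal_density a s x) * ennreal (normal_density b 1 y))"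
    unfolding normal_measure_def
    by (rule pair_measure_density)
      (auto simp: N.sigma_finite_measure sigma_finite_lborel normal_measure_def[symmetric])
  also have "\<dots> = density lborel (\<lambda>p. ennreal (prod_normal_density a s b p))"
    by (auto simp: lborel_prod prod_normal_density_def ennreal_mult' split_beta' intro!: density_cong)
  finally show ?thesis ..
qed

lemma emeasure_prod_normal_mixture:
  assumes w: "valid_mixture n w sx" and S: "S \<in> sets borel"
  shows "emeasure (prod_normal_mixture n w mx sx my) S
    = (\<Sum>i<n. ennreal (w i) * emeasure (density lborel (\<lambda>p. ennreal (prod_normal_density (mx i) (sx i) (my i) p))) S)"
proof -
  have w_nonneg: "\<And>i. i < n \<Longrightarrow> 0 \<le> w i"
    using w by (auto simp: valid_mixture_def)
  have "ennreal (prod_normal_mixture_density n w mx sx my p) * indicator S p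
      = (\<Sum>i<n. ennreal (w i) * (ennreal (prod_normal_density (mx i) (sx i) (my i) p) * indicator S p))" for p
  proof -
    have "ennreal (prod_normal_mixture_density n w mx sx my p)
        = (\<Sum>i<n. ennreal (w i * prod_normal_density (mx i) (sx i) (my i) p))"
      unfolding prod_normal_mixture_density_def
      by (rule sum_ennreal[symmetric]) (simp add: w_nonneg prod_normal_density_nonneg)
    then show ?thesis
      by (simp add: sum_distrib_right ennreal_mult' w_nonneg mult.assoc)
  qed
  then have "emeasure (prod_normal_mixture n w mx sx my) S
      = (\<integral>\<^sup>+p. (\<Sum>i<n. ennreal (w i) * (ennreal (prod_normal_density (mx i) (sx i) (my i) p) * indicator S p)) \<partial>lborel)"
    unfolding prod_normal_mixture_def using S by (simp add: emeasure_density)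
  also have "\<dots> = (\<Sum>i<n. ennreal (w i) * emeasure (density lborel (\<lambda>p. ennreal (prod_normal_density (mx i) (sx i) (my i) p))) S)"
    using S by (simp add: nn_integral_sum nn_integral_cmult emeasure_density)
  finally show ?thesis .
qed

lemma measure_prod_normal_mixture_Times:
  assumes w: "valid_mixture n w sx" and [measurable]: "A \<in> sets borel" "B \<in> sets borel"
  shows "measure (prod_normal_mixture n w mx sx my) (A \<times> B)
    = (\<Sum>i<n. w i * measure (normal_measure (mx i) (sx i)) A * measure (normal_measure (my i) 1) B)"
proof -
  have w_nonneg: "\<And>i. i < n \<Longrightarrow> 0 \<le> w i" and s: "\<And>i. i < n \<Longrightarrow> 0 < sx i"
    using w by (auto simp: valid_mixture_def)
  have AB: "A \<times> B \<in> sets borel"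
    unfolding borel_prod[symmetric] by simp
  have component: "emeasure (density lborel (\<lambda>p. ennreal (prod_normal_density (mx i) (sx i) (my i) p))) (A \<times> B)
      = ennreal (measure (normal_measure (mx i) (sx i)) A * measure (normal_measure (my i) 1) B)" if "i < n" for i
  proof -
    interpret N1: prob_space "normal_measure (mx i) (sx i)"
      using s[OF that] by (rule prob_space_normal_measure)
    interpret N2: prob_space "normal_measure (my i) 1"
      by (rule prob_space_normal_measure) simp
    show ?thesis
      using s[OF that] by (simp add: density_prod_normal_density N2.emeasure_pair_measure_Times
        N1.emeasure_eq_measure N2.emeasure_eq_measure ennreal_mult')
  qed
  have "emeasure (prod_normal_mixture n w mx sx my) (A \<times> B)
      = ennreal (\<Sum>i<n. w i * measure (normal_measure (mx i) (sx i)) A * measure (normal_measure (my i) 1) B)"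
    unfolding emeasure_prod_normal_mixture[OF w AB] using w_nonneg
    by (subst sum_ennreal[symmetric]) (auto intro!: sum.cong simp: component ennreal_mult' mult.assoc)
  moreover have "0 \<le> (\<Sum>i<n. w i * measure (normal_measure (mx i) (sx i)) A * measure (normal_measure (my i) 1) B)"
    using w_nonneg by (auto intro!: sum_nonneg)
  ultimately show ?thesis
    by (simp add: measure_def)
qed

lemma bvn_density_uncorrelated:
  assumes s1: "0 < s1" and s2: "0 < s2"
  shows "bvn_density m1 m2 s1 s2 0 p = normal_density m1 s1 (fst p) * normal_density m2 s2 (snd p)"
proof -
  have normal: "normal_density m s x = exp (- (x - m)\<^sup>2 / (2 * s\<^sup>2)) / (sqrt (2 * pi) * s)" if "0 < s" for m s x :: real
    using that by (simp add: normal_density_def real_sqrt_mult)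
  have exponent: "- (((fst p - m1) / s1)\<^sup>2 - 2 * 0 * ((fst p - m1) / s1) * ((snd p - m2) / s2) + ((snd p - m2) / s2)\<^sup>2) / (2 * (1 - 0\<^sup>2))
      = - (fst p - m1)\<^sup>2 / (2 * s1\<^sup>2) + - (snd p - m2)\<^sup>2 / (2 * s2\<^sup>2)"
    by (simp add: power_divide field_simps)
  have normalizer: "2 * pi * s1 * s2 * sqrt (1 - 0\<^sup>2) = (sqrt (2 * pi) * s1) * (sqrt (2 * pi) * s2)"
    by (simp add: real_sqrt_mult[symmetric])
  show ?thesis
    unfolding bvn_density_def Let_def exponent normalizer normal[OF s1] normal[OF s2] exp_add by simp
qed

lemma normal_mixture_prod_normal_mixture:
  assumes w: "valid_mixture n w sx"
  shows "normal_mixture (prod_normal_mixture n w mx sx my)"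
  unfolding normal_mixture_def
proof (intro conjI exI)
  have s: "\<And>i. i < n \<Longrightarrow> 0 < sx i"
    using w by (auto simp: valid_mixture_def)
  have "bivariate_normal (density lborel (\<lambda>p. ennreal (prod_normal_density (mx i) (sx i) (my i) p)))" if "i < n" for i
    unfolding bivariate_normal_def
    using s[OF that] by (intro exI[of _ "mx i"] exI[of _ "my i"] exI[of _ "sx i"] exI[of _ 1] exI[of _ 0])
      (simp add: bvn_density_uncorrelated prod_normal_density_def)
  then show "\<forall>i<n. bivariate_normal (density lborel (\<lambda>p. ennreal (prod_normal_density (mx i) (sx i) (my i) p))) \<and> 0 \<le> w i"
    using w by (auto simp: valid_mixture_def)
  show "\<forall>A\<in>sets borel. emeasure (prod_normal_mixture n w mx sx my) A
      = (\<Sum>i<n. ennreal (w i) * emeasure (density lborel (\<lambda>p. ennreal (prod_normal_density (mx i) (sx i) (my i) p))) A)"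
    using emeasure_prod_normal_mixture[OF w] by blast
qed (use w in \<open>simp_all add: valid_mixture_def\<close>)

lemma measure_prod_normal_mixture_fst_le:
  assumes w: "valid_mixture n w sx"
  shows "measure (prod_normal_mixture n w mx sx my) {p. fst p \<le> x} = (\<Sum>i<n. w i * Phi ((x - mx i) / sx i))"
proof -
  have "{p::real \<times> real. fst p \<le> x} = {..x} \<times> UNIV"
    by auto
  then show ?thesis
    using w by (auto simp: measure_prod_normal_mixture_Times valid_mixture_def measure_normal_measure_atMost
      measure_normal_measure_UNIV intro!: sum.cong)
qed

lemma continuous_strict_cdf_prod_normal_mixture_fst:
  "valid_mixture n w sx \<Longrightarrow> continuous_strict_cdf (\<lambda>x. \<Sum>i<n. w i * Phi ((x - mx i) / sx i))"
  unfolding valid_mixture_def by (rule continuous_strict_cdf_normal_mixture) auto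

lemma VaR_X_prod_normal_mixture:
  assumes w: "valid_mixture n w sx" and b: "0 < b" "b < 1"
  shows "(\<Sum>i<n. w i * Phi ((VaR_X b (prod_normal_mixture n w mx sx my) - mx i) / sx i)) = b"
  using continuous_strict_cdf_cdf_VaR[OF continuous_strict_cdf_prod_normal_mixture_fst[OF w] b]
  by (simp add: VaR_X_def measure_prod_normal_mixture_fst_le[OF w])

lemma VaR_X_prod_normal_mixture_eqI:
  assumes w: "valid_mixture n w sx" and v: "(\<Sum>i<n. w i * Phi ((v - mx i) / sx i)) = b"
  shows "VaR_X b (prod_normal_mixture n w mx sx my) = v"
  using continuous_strict_cdf_prod_normal_mixture_fst[OF w] v
  by (simp add: VaR_X_def measure_prod_normal_mixture_fst_le[OF w] continuous_strict_cdf_def cdf_VaR_eqI)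

text \<open>The tail event \<open>X > VaR\<close> has probability exactly \<open>1 - b\<close>, so the atom correction in
  \<^const>\<open>cond_cdf\<close> vanishes and the conditional law of \<open>Y\<close> reweights the components by their
  tail probabilities.\<close>
lemma cond_cdf_prod_normal_mixture:
  assumes w: "valid_mixture n w sx" and b: "0 < b" "b < 1"
    and v: "v = VaR_X b (prod_normal_mixture n w mx sx my)"
  shows "cond_cdf b (prod_normal_mixture n w mx sx my) y
    = (\<Sum>i<n. w i * (1 - Phi ((v - mx i) / sx i)) / (1 - b) * Phi (y - my i))"
proof -
  have s: "\<And>i. i < n \<Longrightarrow> 0 < sx i" and sum_w: "(\<Sum>i<n. w i) = 1"
    using w by (auto simp: valid_mixture_def)
  have gt: "{p::real \<times> real. v < fst p} = {v<..} \<times> UNIV"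
    and joint: "{p::real \<times> real. snd p \<le> y \<and> v < fst p} = {v<..} \<times> {..y}"
    by auto
  have "measure (prod_normal_mixture n w mx sx my) {p. v < fst p} = (\<Sum>i<n. w i * (1 - Phi ((v - mx i) / sx i)))"
    unfolding gt using w s
    by (auto simp: measure_prod_normal_mixture_Times measure_normal_measure_greaterThan measure_normal_measure_UNIV
      intro!: sum.cong)
  also have "\<dots> = 1 - b"
    using VaR_X_prod_normal_mixture[OF w b, of mx my] sum_w v
    by (simp add: right_diff_distrib sum_subtractf)
  finally have "measure (prod_normal_mixture n w mx sx my) {p. v < fst p} = 1 - b" .
  moreover have "measure (prod_normal_mixture n w mx sx my) {p. snd p \<le> y \<and> v < fst p}
      = (\<Sum>i<n. w i * (1 - Phi ((v - mx i) / sx i)) * Phi (y - my i))"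
    unfolding joint using w s
    by (auto simp: measure_prod_normal_mixture_Times measure_normal_measure_greaterThan measure_normal_measure_atMost
      intro!: sum.cong)
  ultimately show ?thesis
    unfolding cond_cdf_def Let_def v[symmetric] by (simp add: sum_divide_distrib)
qed

section \<open>Convex level sets\<close>

lemma integral_density_mixture:
  fixes f :: "'a \<Rightarrow> 'b::{banach, second_countable_topology}"
  assumes [measurable]: "d0 \<in> borel_measurable M" "d1 \<in> borel_measurable M"
    and nonneg: "\<And>x. 0 \<le> d0 x" "\<And>x. 0 \<le> d1 x" and t: "0 \<le> t" "t \<le> 1"
    and i0: "integrable (density M (\<lambda>x. ennreal (d0 x))) f"
    and i1: "integrable (density M (\<lambda>x. ennreal (d1 x))) f"
  shows "integrable (density M (\<lambda>x. ennreal ((1 - t) * d0 x + t * d1 x))) f"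
    and "(\<integral>x. f x \<partial>density M (\<lambda>x. ennreal ((1 - t) * d0 x + t * d1 x)))
      = (1 - t) *\<^sub>R (\<integral>x. f x \<partial>density M (\<lambda>x. ennreal (d0 x))) + t *\<^sub>R (\<integral>x. f x \<partial>density M (\<lambda>x. ennreal (d1 x)))"
proof -
  have [measurable]: "f \<in> borel_measurable M"
    using borel_measurable_integrable[OF i0] by simp
  have nonneg_mix: "\<And>x. 0 \<le> (1 - t) * d0 x + t * d1 x"
    using nonneg t by simp
  have j0: "integrable M (\<lambda>x. d0 x *\<^sub>R f x)" and j1: "integrable M (\<lambda>x. d1 x *\<^sub>R f x)"
    using i0 i1 nonneg by (simp_all add: integrable_density)
  have mix: "(\<lambda>x. ((1 - t) * d0 x + t * d1 x) *\<^sub>R f x) = (\<lambda>x. (1 - t) *\<^sub>R (d0 x *\<^sub>R f x) + t *\<^sub>R (d1 x *\<^sub>R f x))"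
    by (simp add: fun_eq_iff scaleR_add_left)
  have "integrable M (\<lambda>x. ((1 - t) * d0 x + t * d1 x) *\<^sub>R f x)"
    unfolding mix using j0 j1 by (intro Bochner_Integration.integrable_add integrable_scaleR_right)
  then show "integrable (density M (\<lambda>x. ennreal ((1 - t) * d0 x + t * d1 x))) f"
    using nonneg_mix by (simp add: integrable_density)
  have "(\<integral>x. f x \<partial>density M (\<lambda>x. ennreal ((1 - t) * d0 x + t * d1 x)))
      = (\<integral>x. (1 - t) *\<^sub>R (d0 x *\<^sub>R f x) + t *\<^sub>R (d1 x *\<^sub>R f x) \<partial>M)"
    using nonneg_mix by (simp add: integral_density mix)
  also have "\<dots> = (\<integral>x. (1 - t) *\<^sub>R (d0 x *\<^sub>R f x) \<partial>M) + (\<integral>x. t *\<^sub>R (d1 x *\<^sub>R f x) \<partial>M)"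
    using j0 j1 by (intro Bochner_Integration.integral_add integrable_scaleR_right)
  also have "\<dots> = (1 - t) *\<^sub>R (\<integral>x. d0 x *\<^sub>R f x \<partial>M) + t *\<^sub>R (\<integral>x. d1 x *\<^sub>R f x \<partial>M)"
    by (simp only: integral_scaleR_right)
  finally show "(\<integral>x. f x \<partial>density M (\<lambda>x. ennreal ((1 - t) * d0 x + t * d1 x)))
      = (1 - t) *\<^sub>R (\<integral>x. f x \<partial>density M (\<lambda>x. ennreal (d0 x))) + t *\<^sub>R (\<integral>x. f x \<partial>density M (\<lambda>x. ennreal (d1 x)))"
    using nonneg by (simp add: integral_density)
qed

lemma not_identifiable_not_elicitable_if_mixture:
  fixes T :: "'a measure \<Rightarrow> ereal"
  assumes [measurable]: "d0 \<in> borel_measurable M" "d1 \<in> borel_measurable M"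
    and nonneg: "\<And>x. 0 \<le> d0 x" "\<And>x. 0 \<le> d1 x" and t: "0 \<le> t" "t \<le> 1"
    and F0: "F0 = density M (\<lambda>x. ennreal (d0 x))" and F1: "F1 = density M (\<lambda>x. ennreal (d1 x))"
    and Ft: "Ft = density M (\<lambda>x. ennreal ((1 - t) * d0 x + t * d1 x))"
    and C: "F0 \<in> C" "F1 \<in> C" "Ft \<in> C"
    and T: "T F0 = ereal r" "T F1 = ereal r" "T Ft = ereal r'" "r \<noteq> r'"
  shows "\<not> (\<exists>V :: real \<Rightarrow> 'a \<Rightarrow> 'b::{banach, second_countable_topology}. strict_identification V T C)
    \<and> \<not> elicitable T C"
proof -
  note mixture = integral_density_mixture[OF assms(1-6), folded F0 F1 Ft]
  have "\<not> strict_identification V T C" for V :: "real \<Rightarrow> 'a \<Rightarrow> 'b"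
  proof
    assume V: "strict_identification V T C"
    have int: "integrable F0 (V r)" "integrable F1 (V r)"
      and zero: "(\<integral>y. V r y \<partial>F0) = 0" "(\<integral>y. V r y \<partial>F1) = 0"
      using V C T unfolding strict_identification_def by auto
    then have "(\<integral>y. V r y \<partial>Ft) = 0"
      using mixture(2)[OF int] by simp
    then have "T Ft = ereal r"
      using V C unfolding strict_identification_def by auto
    with T show False by simp
  qed
  moreover have "\<not> strictly_consistent S T C" for S
  proof
    assume S: "strictly_consistent S T C"
    have int: "\<And>F r. F \<in> C \<Longrightarrow> integrable F (S r)"
      using S unfolding strictly_consistent_def by auto
    have less: "\<And>F u r. F \<in> C \<Longrightarrow> T F = ereal u \<Longrightarrow> r \<noteq> u \<Longrightarrow> (\<integral>y. S u y \<partial>F) < (\<integral>y. S r y \<partial>F)"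
      using S unfolding strictly_consistent_def by blast
    have "(\<integral>y. S r y \<partial>F0) < (\<integral>y. S r' y \<partial>F0)" "(\<integral>y. S r y \<partial>F1) < (\<integral>y. S r' y \<partial>F1)"
      using less C T by auto
    then have "(\<integral>y. S r y \<partial>Ft) \<le> (\<integral>y. S r' y \<partial>Ft)"
      using mixture(2)[OF int[OF C(1)] int[OF C(2)], of r] mixture(2)[OF int[OF C(1)] int[OF C(2)], of r'] t
      by (simp add: add_mono mult_left_mono)
    moreover have "(\<integral>y. S r' y \<partial>Ft) < (\<integral>y. S r y \<partial>Ft)"
      using less C T by auto
    ultimately show False by simp
  qed
  ultimately show ?thesis
    unfolding elicitable_def by blast
qed

lemma ext_integral_eq_set_integral:
  assumes "set_integrable lborel A f"
  shows "ext_integral A f = ereal (LINT x:A|lborel. f x)"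
proof -
  let ?h = "\<lambda>x. indicator A x *\<^sub>R f x"
  have int: "integrable lborel ?h"
    using assms by (simp add: set_integrable_def)
  have pos: "(\<integral>\<^sup>+x\<in>A. ennreal (f x) \<partial>lborel) = (\<integral>\<^sup>+x. ennreal (?h x) \<partial>lborel)"
    and neg: "(\<integral>\<^sup>+x\<in>A. ennreal (- f x) \<partial>lborel) = (\<integral>\<^sup>+x. ennreal (- ?h x) \<partial>lborel)"
    by (auto intro!: nn_integral_cong simp: indicator_def)
  obtain r1 where r1: "0 \<le> r1" "(\<integral>\<^sup>+x. ennreal (?h x) \<partial>lborel) = ennreal r1"
    using integrableD(2)[OF int] by (cases "\<integral>\<^sup>+x. ennreal (?h x) \<partial>lborel") auto
  obtain r2 where r2: "0 \<le> r2" "(\<integral>\<^sup>+x. ennreal (- ?h x) \<partial>lborel) = ennreal r2"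
    using integrableD(3)[OF int] by (cases "\<integral>\<^sup>+x. ennreal (- ?h x) \<partial>lborel") auto
  have "(LINT x:A|lborel. f x) = r1 - r2"
    unfolding set_lebesgue_integral_def real_lebesgue_integral_def[OF int] r1(2) r2(2) using r1 r2 by simp
  then show ?thesis
    unfolding ext_integral_def Let_def pos neg r1(2) r2(2) using r1(1) r2(1) by simp
qed

lemma CoVaR_CoES_MES_of_cond_cdf:
  assumes F: "cond_cdf b F = shift_mix_cdf p" and p: "0 \<le> p" "p \<le> 1" and a: "0 < a" "a < 1"
  shows "CoVaR a b F = shift_mix_quantile p a"
    and "CoES a b F = ereal ((LINT g:{a<..<1}|lborel. shift_mix_quantile p g) / (1 - a))"
    and "MES b F = ereal (LINT g:{0<..<1}|lborel. shift_mix_quantile p g)"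
proof -
  have CoVaR: "(\<lambda>g. CoVaR g b F) = shift_mix_quantile p"
    by (simp add: fun_eq_iff CoVaR_def F shift_mix_quantile_def)
  then show "CoVaR a b F = shift_mix_quantile p a"
    by (simp add: fun_eq_iff)
  show "CoES a b F = ereal ((LINT g:{a<..<1}|lborel. shift_mix_quantile p g) / (1 - a))"
    unfolding CoES_def CoVaR using p a
    by (simp add: ext_integral_eq_set_integral set_integrable_shift_mix_quantile)
  show "MES b F = ereal (LINT g:{0<..<1}|lborel. shift_mix_quantile p g)"
    unfolding MES_def CoVaR using p
    by (simp add: ext_integral_eq_set_integral set_integrable_shift_mix_quantile)
qed

section \<open>The counterexample\<close>

lemma cond_cdf_prod_normal_mixture_equal_tails:
  assumes w: "valid_mixture n w sx" and b: "0 < b" "b < 1"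
    and tails: "\<And>i. i < n \<Longrightarrow> Phi ((v - mx i) / sx i) = b"
  shows "cond_cdf b (prod_normal_mixture n w mx sx my) y = (\<Sum>i<n. w i * Phi (y - my i))"
proof -
  have "(\<Sum>i<n. w i * Phi ((v - mx i) / sx i)) = b"
    using w tails by (simp add: valid_mixture_def sum_distrib_right[symmetric])
  then have "v = VaR_X b (prod_normal_mixture n w mx sx my)"
    using VaR_X_prod_normal_mixture_eqI[OF w] by simp
  then show ?thesis
    using b tails by (simp add: cond_cdf_prod_normal_mixture[OF w b])
qed

definition indep_example :: "(real \<times> real) measure" where
  "indep_example = prod_normal_mixture 2 (\<lambda>_. 1/2) (\<lambda>_. 1) (\<lambda>_. 1) ((!) [1, 0])"

definition matched_example :: "real \<Rightarrow> (real \<times> real) measure" where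
  "matched_example z = prod_normal_mixture 2 (\<lambda>_. 1/2) ((!) [0, - z]) ((!) [1, 2]) ((!) [1, 0])"

definition midpoint_example :: "real \<Rightarrow> (real \<times> real) measure" where
  "midpoint_example z = prod_normal_mixture 4 (\<lambda>_. 1/4) ((!) [1, 1, 0, - z]) ((!) [1, 1, 1, 2]) ((!) [1, 0, 1, 0])"

lemma midpoint_example_eq_mixture:
  "midpoint_example z = density lborel (\<lambda>p. ennreal
     ((1 - 1/2) * prod_normal_mixture_density 2 (\<lambda>_. 1/2) (\<lambda>_. 1) (\<lambda>_. 1) ((!) [1, 0]) p
      + 1/2 * prod_normal_mixture_density 2 (\<lambda>_. 1/2) ((!) [0, - z]) ((!) [1, 2]) ((!) [1, 0]) p))"
  unfolding midpoint_example_def prod_normal_mixture_def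
  by (intro arg_cong[where f="density lborel"] ext arg_cong[where f=ennreal])
    (simp add: prod_normal_mixture_density_def eval_nat_numeral field_simps)

lemma valid_mixture_examples:
  "valid_mixture 2 (\<lambda>_. 1/2) (\<lambda>_. 1)"
  "valid_mixture 2 (\<lambda>_. 1/2) ((!) [1, 2])"
  "valid_mixture 4 (\<lambda>_. 1/4) ((!) [1, 1, 1, 2])"
  by (auto simp: valid_mixture_def eval_nat_numeral less_Suc_eq)

lemma cond_cdf_indep_example:
  assumes b: "0 < b" "b < 1" and z: "Phi z = b"
  shows "cond_cdf b indep_example = shift_mix_cdf (1/2)"
  using cond_cdf_prod_normal_mixture_equal_tails[OF valid_mixture_examples(1) b, of "z + 1"] z
  by (auto simp: fun_eq_iff indep_example_def shift_mix_cdf_def eval_nat_numeral)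

lemma cond_cdf_matched_example:
  assumes b: "0 < b" "b < 1" and z: "Phi z = b"
  shows "cond_cdf b (matched_example z) = shift_mix_cdf (1/2)"
proof -
  have "Phi ((z - [0, - z] ! i) / [1, 2] ! i) = b" if "i < 2" for i
    using that z by (auto simp: eval_nat_numeral less_Suc_eq)
  from cond_cdf_prod_normal_mixture_equal_tails[OF valid_mixture_examples(2) b this] show ?thesis
    by (auto simp: fun_eq_iff matched_example_def shift_mix_cdf_def eval_nat_numeral)
qed

lemma cond_cdf_midpoint_example:
  assumes b: "0 < b" "b < 1" and z: "Phi z = b"
  obtains p where "0 \<le> p" "p < 1/2" "cond_cdf b (midpoint_example z) = shift_mix_cdf p"
proof -
  define v where "v = VaR_X b (midpoint_example z)"
  define G where "G x = (\<Sum>i<4. 1/4 * Phi ((x - [1, 1, 0, - z] ! i) / [1, 1, 1, 2] ! i))" for x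
  define c where "c x = (1 - Phi x) / (4 * (1 - b))" for x
  have "G v = b"
    using VaR_X_prod_normal_mixture[OF valid_mixture_examples(3) b] by (simp add: G_def v_def midpoint_example_def)
  then have "2 * (1 - Phi (v - 1)) + (1 - Phi v) + (1 - Phi ((v + z) / 2)) = 4 * (1 - b)"
    by (simp add: G_def eval_nat_numeral)
  moreover have "2 * c (v - 1) + c v + c ((v + z) / 2)
      = (2 * (1 - Phi (v - 1)) + (1 - Phi v) + (1 - Phi ((v + z) / 2))) / (4 * (1 - b))"
    by (simp only: c_def times_divide_eq_right add_divide_distrib)
  ultimately have sum_c: "2 * c (v - 1) + c v + c ((v + z) / 2) = 1"
    using b by simp
  have "G z < b"
    using Phi_less[of "z - 1" z] z by (simp add: G_def eval_nat_numeral)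
  moreover have "strict_mono G"
    using continuous_strict_cdf_prod_normal_mixture_fst[OF valid_mixture_examples(3), of "(!) [1, 1, 0, - z]"]
    unfolding continuous_strict_cdf_def G_def[abs_def] by simp
  ultimately have "z < v"
    using \<open>G v = b\<close> by (metis strict_mono_less)
  then have "c v < c ((v + z) / 2)"
    using Phi_less[of "(v + z) / 2" v] b by (simp add: c_def divide_strict_right_mono)
  moreover have "0 \<le> c (v - 1)" "0 \<le> c v"
    using b Phi_le_1 by (simp_all add: c_def)
  moreover have "cond_cdf b (midpoint_example z) = shift_mix_cdf (c (v - 1) + c v)"
  proof
    fix y
    have "cond_cdf b (midpoint_example z) y = (c (v - 1) + c v) * Phi (y - 1) + (c (v - 1) + c ((v + z) / 2)) * Phi y"
      unfolding midpoint_example_def cond_cdf_prod_normal_mixture[OF valid_mixture_examples(3) b v_def[unfolded midpoint_example_def]]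
      by (simp add: c_def eval_nat_numeral field_simps)
    also have "\<dots> = shift_mix_cdf (c (v - 1) + c v) y"
    proof -
      have "c (v - 1) + c ((v + z) / 2) = 1 - (c (v - 1) + c v)"
        using sum_c by linarith
      then show ?thesis
        by (simp add: shift_mix_cdf_def)
    qed
    finally show "cond_cdf b (midpoint_example z) y = shift_mix_cdf (c (v - 1) + c v) y" .
  qed
  ultimately show thesis
    using sum_c by (intro that[of "c (v - 1) + c v"]) auto
qed

lemma not_identifiable_not_elicitable_if_weight_sensitive:
  fixes T :: "(real \<times> real) measure \<Rightarrow> ereal" and \<tau> :: "real \<Rightarrow> real"
  assumes C: "\<And>P. normal_mixture P \<Longrightarrow> P \<in> C" and \<beta>: "0 < \<beta>" "\<beta> < 1"
    and T: "\<And>F p. 0 \<le> p \<Longrightarrow> p \<le> 1/2 \<Longrightarrow> cond_cdf \<beta> F = shift_mix_cdf p \<Longrightarrow> T F = ereal (\<tau> p)"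
    and \<tau>: "\<And>p. 0 \<le> p \<Longrightarrow> p < 1/2 \<Longrightarrow> \<tau> p \<noteq> \<tau> (1/2)"
  shows "\<not> (\<exists>V :: real \<Rightarrow> real \<times> real \<Rightarrow> 'b::{banach, second_countable_topology}. strict_identification V T C)
    \<and> \<not> elicitable T C"
proof -
  obtain z where z: "Phi z = \<beta>"
    using continuous_strict_cdf_attains[OF continuous_strict_cdf_shift_mix_cdf[of 0]] \<beta>
    by (auto simp: shift_mix_cdf_def)
  obtain p where p: "0 \<le> p" "p < 1/2" and mid: "cond_cdf \<beta> (midpoint_example z) = shift_mix_cdf p"
    using cond_cdf_midpoint_example[OF \<beta> z] by blast
  have examples: "indep_example \<in> C" "matched_example z \<in> C" "midpoint_example z \<in> C"
    unfolding indep_example_def matched_example_def midpoint_example_def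
    by (intro C normal_mixture_prod_normal_mixture valid_mixture_examples)+
  show ?thesis
    by (rule not_identifiable_not_elicitable_if_mixture[where t="1/2" and r="\<tau> (1/2)" and r'="\<tau> p",
        OF borel_measurable_prod_normal_mixture_density[folded measurable_lborel2]
          borel_measurable_prod_normal_mixture_density[folded measurable_lborel2]
          prod_normal_mixture_density_nonneg[OF valid_mixture_examples(1)]
          prod_normal_mixture_density_nonneg[OF valid_mixture_examples(2)] _ _
          indep_example_def[unfolded prod_normal_mixture_def] matched_example_def[unfolded prod_normal_mixture_def]
          midpoint_example_eq_mixture examples])
      (use T \<tau>[OF p] p mid cond_cdf_indep_example[OF \<beta> z] cond_cdf_matched_example[OF \<beta> z] in auto)
qed

theorem mainTheorem4:
  fixes \<alpha> \<beta> :: real and C :: "(real \<times> real) measure set"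
  assumes "0 < \<alpha>" "\<alpha> < 1" "0 < \<beta>" "\<beta> < 1"
    and "C \<subseteq> prob_dists2"
    and "\<And>P. normal_mixture P \<Longrightarrow> P \<in> C"
  shows "\<not> (\<exists>V :: real \<Rightarrow> real \<times> real \<Rightarrow> real ^ 'm. strict_identification V (\<lambda>F. ereal (CoVaR \<alpha> \<beta> F)) C)
       \<and> \<not> elicitable (\<lambda>F. ereal (CoVaR \<alpha> \<beta> F)) C
       \<and> \<not> (\<exists>V :: real \<Rightarrow> real \<times> real \<Rightarrow> real ^ 'm. strict_identification V (CoES \<alpha> \<beta>) C)
       \<and> \<not> elicitable (CoES \<alpha> \<beta>) C
       \<and> \<not> (\<exists>V :: real \<Rightarrow> real \<times> real \<Rightarrow> real ^ 'm. strict_identification V (MES \<beta>) C)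
       \<and> \<not> elicitable (MES \<beta>) C"
proof -
  note weight_sensitive = not_identifiable_not_elicitable_if_weight_sensitive[OF assms(6,3,4)]
    and functional_values = CoVaR_CoES_MES_of_cond_cdf[OF _ _ _ assms(1,2)]
  have "\<not> (\<exists>V :: real \<Rightarrow> real \<times> real \<Rightarrow> real ^ 'm. strict_identification V (\<lambda>F. ereal (CoVaR \<alpha> \<beta> F)) C)
      \<and> \<not> elicitable (\<lambda>F. ereal (CoVaR \<alpha> \<beta> F)) C"
    by (rule weight_sensitive[where \<tau>="\<lambda>p. shift_mix_quantile p \<alpha>"])
      (use assms(1,2) in \<open>auto simp: functional_values dest: shift_mix_quantile_less[of _ "1/2" \<alpha>]\<close>)
  moreover have "\<not> (\<exists>V :: real \<Rightarrow> real \<times> real \<Rightarrow> real ^ 'm. strict_identification V (CoES \<alpha> \<beta>) C)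
      \<and> \<not> elicitable (CoES \<alpha> \<beta>) C"
    by (rule weight_sensitive[where \<tau>="\<lambda>p. (LINT g:{\<alpha><..<1}|lborel. shift_mix_quantile p g) / (1 - \<alpha>)"])
      (use assms(1,2) in \<open>auto simp: functional_values dest: set_integral_shift_mix_quantile_less[of _ "1/2" \<alpha>]\<close>)
  moreover have "\<not> (\<exists>V :: real \<Rightarrow> real \<times> real \<Rightarrow> real ^ 'm. strict_identification V (MES \<beta>) C)
      \<and> \<not> elicitable (MES \<beta>) C"
    by (rule weight_sensitive[where \<tau>="\<lambda>p. LINT g:{0<..<1}|lborel. shift_mix_quantile p g"])
      (auto simp: functional_values dest: set_integral_shift_mix_quantile_less[of _ "1/2" 0])
  ultimately show ?thesis
    by blast
qed

end
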